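(* A category $\mathcal{C}$ is complete w.r.t. varieties if at least one of the following holds: (1) $\mathcal{C}$ is wellpowered w.r.t. varieties and has intersections; (2) $\mathcal{C}$ is complete w.r.t. systems of equations and every system of equations in $\mathcal{C}$ has a general solution.
   Context: An equation is a pair of parallel morphisms; a system of equations is a non-empty set of equations with a common domain $A$; a solution is a morphism $a$ into $A$ with $fa=ga$ for every equation $f\approx g$; $E\Rightarrow K$ means every solution of $E$ is a solution of $K$. A general solution of $E$ is a solution $v$ through which every solution factors uniquely; a variety is a general solution of some system. For morphisms with common codomain, $f\le v$ means $f=vh$ for some $h$. For a non-empty set $S$ of morphisms with codomain $A$: a system $E$ on $A$ is generated by $S$ if every element of $S$ is a solution of $E$ and every system $K$ on $A$ having all elements of $S$ as solutions satisfies $E\Rightarrow K$; a variety $v$ is generated by $S$ if $f\le v$ for all $f\in S$ and $v\le w$ for every variety $w$ with $f\le w$ for all $f\in S$. $\mathcal{C}$ is complete w.r.t. varieties (resp. systems of equations) if every non-empty set of morphisms with a common codomain generates some variety (resp. some system of equations). $\mathcal{C}$ is wellpowered w.r.t. varieties if for each object $A$ the varieties with codomain $A$ form a small class up to isomorphism ($f,g$ isomorphic if $f=gh$ for an isomorphism $h$). $\mathcal{C}$ has intersections if every set (possibly large families are not required) of monomorphisms with common codomain has a wide pullback. *)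

theory Defs
  imports Main
begin

record ('o, 'm) cat =
  Obj  :: "'o set"
  Arr  :: "'m set"
  Dom  :: "'m \<Rightarrow> 'o"
  Cod  :: "'m \<Rightarrow> 'o"
  Id   :: "'o \<Rightarrow> 'm"
  Comp :: "'m \<Rightarrow> 'm \<Rightarrow> 'm"   (* Comp C g f = g \<circ> f, defined when Cod f = Dom g *)

definition category :: "('o, 'm) cat \<Rightarrow> bool" where
  "category C \<longleftrightarrow>
     (\<forall>f\<in>Arr C. Dom C f \<in> Obj C \<and> Cod C f \<in> Obj C) \<and>
     (\<forall>A\<in>Obj C. Id C A \<in> Arr C \<and> Dom C (Id C A) = A \<and> Cod C (Id C A) = A) \<and>
     (\<forall>f\<in>Arr C. \<forall>g\<in>Arr C. Cod C f = Dom C g \<longrightarrow>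
        Comp C g f \<in> Arr C \<and> Dom C (Comp C g f) = Dom C f \<and> Cod C (Comp C g f) = Cod C g) \<and>
     (\<forall>f\<in>Arr C. Comp C (Id C (Cod C f)) f = f \<and> Comp C f (Id C (Dom C f)) = f) \<and>
     (\<forall>f\<in>Arr C. \<forall>g\<in>Arr C. \<forall>h\<in>Arr C. Cod C f = Dom C g \<longrightarrow> Cod C g = Dom C h \<longrightarrow>
        Comp C h (Comp C g f) = Comp C (Comp C h g) f)"

section \<open>Size: "sets" are collections of cardinality at most that of the universe type 'k\<close>

definition small :: "'k itself \<Rightarrow> 'a set \<Rightarrow> bool" where
  "small (k::'k itself) S \<longleftrightarrow> (\<exists>e :: 'k \<Rightarrow> 'a. S \<subseteq> range e)"

definition iso :: "('o, 'm) cat \<Rightarrow> 'm \<Rightarrow> bool" where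
  "iso C h \<longleftrightarrow> h \<in> Arr C \<and> (\<exists>h'\<in>Arr C. Dom C h' = Cod C h \<and> Cod C h' = Dom C h \<and>
      Comp C h' h = Id C (Dom C h) \<and> Comp C h h' = Id C (Cod C h))"

definition mono :: "('o, 'm) cat \<Rightarrow> 'm \<Rightarrow> bool" where
  "mono C m \<longleftrightarrow> m \<in> Arr C \<and> (\<forall>x\<in>Arr C. \<forall>y\<in>Arr C.
      Cod C x = Dom C m \<longrightarrow> Cod C y = Dom C m \<longrightarrow> Dom C x = Dom C y \<longrightarrow>
      Comp C m x = Comp C m y \<longrightarrow> x = y)"

definition isomorphic :: "('o, 'm) cat \<Rightarrow> 'm \<Rightarrow> 'm \<Rightarrow> bool" where
  "isomorphic C f g \<longleftrightarrow> f \<in> Arr C \<and> g \<in> Arr C \<and> Cod C f = Cod C g \<and>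
     (\<exists>h. iso C h \<and> Dom C h = Dom C f \<and> Cod C h = Dom C g \<and> f = Comp C g h)"

definition factors :: "('o, 'm) cat \<Rightarrow> 'm \<Rightarrow> 'm \<Rightarrow> bool" where
  "factors C f v \<longleftrightarrow> f \<in> Arr C \<and> v \<in> Arr C \<and> Cod C f = Cod C v \<and>
     (\<exists>h\<in>Arr C. Dom C h = Dom C f \<and> Cod C h = Dom C v \<and> f = Comp C v h)"

definition equation :: "('o, 'm) cat \<Rightarrow> 'o \<Rightarrow> 'm \<times> 'm \<Rightarrow> bool" where
  "equation C A e \<longleftrightarrow> fst e \<in> Arr C \<and> snd e \<in> Arr C \<and>
     Dom C (fst e) = A \<and> Dom C (snd e) = A \<and> Cod C (fst e) = Cod C (snd e)"

definition system :: "'k itself \<Rightarrow> ('o, 'm) cat \<Rightarrow> 'o \<Rightarrow> ('m \<times> 'm) set \<Rightarrow> bool" where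
  "system k C A E \<longleftrightarrow> A \<in> Obj C \<and> E \<noteq> {} \<and> small k E \<and> (\<forall>e\<in>E. equation C A e)"

definition solution :: "('o, 'm) cat \<Rightarrow> 'o \<Rightarrow> ('m \<times> 'm) set \<Rightarrow> 'm \<Rightarrow> bool" where
  "solution C A E a \<longleftrightarrow> a \<in> Arr C \<and> Cod C a = A \<and>
     (\<forall>(f, g)\<in>E. Comp C f a = Comp C g a)"

definition sys_implies :: "('o, 'm) cat \<Rightarrow> 'o \<Rightarrow> ('m \<times> 'm) set \<Rightarrow> ('m \<times> 'm) set \<Rightarrow> bool" where
  "sys_implies C A E K \<longleftrightarrow> (\<forall>a. solution C A E a \<longrightarrow> solution C A K a)"

definition general_solution :: "('o, 'm) cat \<Rightarrow> 'o \<Rightarrow> ('m \<times> 'm) set \<Rightarrow> 'm \<Rightarrow> bool" where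
  "general_solution C A E v \<longleftrightarrow> solution C A E v \<and>
     (\<forall>a. solution C A E a \<longrightarrow>
        (\<exists>!h. h \<in> Arr C \<and> Dom C h = Dom C a \<and> Cod C h = Dom C v \<and> a = Comp C v h))"

definition variety :: "'k itself \<Rightarrow> ('o, 'm) cat \<Rightarrow> 'o \<Rightarrow> 'm \<Rightarrow> bool" where
  "variety k C A v \<longleftrightarrow> (\<exists>E. system k C A E \<and> general_solution C A E v)"

definition system_generated_by ::
    "'k itself \<Rightarrow> ('o, 'm) cat \<Rightarrow> 'o \<Rightarrow> 'm set \<Rightarrow> ('m \<times> 'm) set \<Rightarrow> bool" where
  "system_generated_by k C A S E \<longleftrightarrow> system k C A E \<and> (\<forall>f\<in>S. solution C A E f) \<and>
     (\<forall>K. system k C A K \<and> (\<forall>f\<in>S. solution C A K f) \<longrightarrow> sys_implies C A E K)"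

definition variety_generated_by ::
    "'k itself \<Rightarrow> ('o, 'm) cat \<Rightarrow> 'o \<Rightarrow> 'm set \<Rightarrow> 'm \<Rightarrow> bool" where
  "variety_generated_by k C A S v \<longleftrightarrow> variety k C A v \<and> (\<forall>f\<in>S. factors C f v) \<and>
     (\<forall>w. variety k C A w \<and> (\<forall>f\<in>S. factors C f w) \<longrightarrow> factors C v w)"

definition morphism_family :: "'k itself \<Rightarrow> ('o, 'm) cat \<Rightarrow> 'o \<Rightarrow> 'm set \<Rightarrow> bool" where
  "morphism_family k C A S \<longleftrightarrow> A \<in> Obj C \<and> S \<noteq> {} \<and> small k S \<and> S \<subseteq> Arr C \<and>
     (\<forall>f\<in>S. Cod C f = A)"

definition complete_wrt_varieties :: "'k itself \<Rightarrow> ('o, 'm) cat \<Rightarrow> bool" where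
  "complete_wrt_varieties k C \<longleftrightarrow>
     (\<forall>A S. morphism_family k C A S \<longrightarrow> (\<exists>v. variety_generated_by k C A S v))"

definition complete_wrt_systems :: "'k itself \<Rightarrow> ('o, 'm) cat \<Rightarrow> bool" where
  "complete_wrt_systems k C \<longleftrightarrow>
     (\<forall>A S. morphism_family k C A S \<longrightarrow> (\<exists>E. system_generated_by k C A S E))"

definition wellpowered_wrt_varieties :: "'k itself \<Rightarrow> ('o, 'm) cat \<Rightarrow> bool" where
  "wellpowered_wrt_varieties k C \<longleftrightarrow>
     (\<forall>A\<in>Obj C. \<exists>R. small k R \<and> (\<forall>v. variety k C A v \<longrightarrow> (\<exists>r\<in>R. isomorphic C v r)))"

definition wide_pullback :: "('o, 'm) cat \<Rightarrow> 'o \<Rightarrow> 'm set \<Rightarrow> 'm \<Rightarrow> ('m \<Rightarrow> 'm) \<Rightarrow> bool" where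
  "wide_pullback C A M p \<pi> \<longleftrightarrow>
     p \<in> Arr C \<and> Cod C p = A \<and>
     (\<forall>m\<in>M. \<pi> m \<in> Arr C \<and> Dom C (\<pi> m) = Dom C p \<and> Cod C (\<pi> m) = Dom C m \<and> Comp C m (\<pi> m) = p) \<and>
     (\<forall>q \<sigma>. q \<in> Arr C \<and> Cod C q = A \<and>
        (\<forall>m\<in>M. \<sigma> m \<in> Arr C \<and> Dom C (\<sigma> m) = Dom C q \<and> Cod C (\<sigma> m) = Dom C m \<and> Comp C m (\<sigma> m) = q)
        \<longrightarrow> (\<exists>!u. u \<in> Arr C \<and> Dom C u = Dom C q \<and> Cod C u = Dom C p \<and> Comp C p u = q \<and>
                   (\<forall>m\<in>M. Comp C (\<pi> m) u = \<sigma> m)))"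

definition has_intersections :: "'k itself \<Rightarrow> ('o, 'm) cat \<Rightarrow> bool" where
  "has_intersections k C \<longleftrightarrow>
     (\<forall>A M. A \<in> Obj C \<and> small k M \<and> (\<forall>m\<in>M. mono C m \<and> Cod C m = A) \<longrightarrow>
        (\<exists>p \<pi>. wide_pullback C A M p \<pi>))"

definition every_system_has_general_solution :: "'k itself \<Rightarrow> ('o, 'm) cat \<Rightarrow> bool" where
  "every_system_has_general_solution k C \<longleftrightarrow>
     (\<forall>A E. system k C A E \<longrightarrow> (\<exists>v. general_solution C A E v))"

end

theory Submission
  imports Defs
begin

text \<open>
  A variety is a monomorphism, and a morphism factors through a variety iff it solves the
  variety's system.
  (1) Up to isomorphism only a set of varieties contains \<open>S\<close>; being monos, they have an
  intersection (wide pullback), which is the general solution of the union of their systems and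
  hence the least variety containing \<open>S\<close>.
  (2) The general solution of the system generated by \<open>S\<close> is the least variety containing \<open>S\<close>:
  any variety containing \<open>S\<close> is the general solution of a system that \<open>S\<close> solves, and that system
  is implied by the generated one.
\<close>

unbundle cardinal_syntax

lemma small_iff_card_of_ordLeq: "small (k::'k itself) S \<longleftrightarrow> |S| \<le>o |UNIV :: 'k set|"
proof
  assume "small k S"
  then obtain e :: "'k \<Rightarrow> _" where "S \<subseteq> range e" unfolding small_def by (elim exE)
  then show "|S| \<le>o |UNIV :: 'k set|" by (rule surj_imp_ordLeq)
next
  assume le: "|S| \<le>o |UNIV :: 'k set|"
  show "small k S"
  proof (cases "S = {}")
    case False
    then have "\<exists>e :: 'k \<Rightarrow> _. e ` UNIV = S" using card_of_ordLeq2[OF False, of "UNIV :: 'k set"] le by simp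
    then show ?thesis unfolding small_def by (metis order_refl)
  qed (simp add: small_def)
qed

lemma small_subset: "small (k::'k itself) A \<Longrightarrow> B \<subseteq> A \<Longrightarrow> small k B"
  unfolding small_def by blast

lemma small_insert:
  assumes "infinite (UNIV :: 'k set)" "small (k::'k itself) A"
  shows "small k (insert x A)"
proof -
  have "|{x}| \<le>o |UNIV :: 'k set|"
    by (simp add: card_of_singl_ordLeq)
  then show ?thesis using assms card_of_Un_ordLeq_infinite_Field[of "|UNIV :: 'k set|" "{x}" A]
    by (simp add: small_iff_card_of_ordLeq Field_card_of card_of_card_order_on)
qed

lemma small_UN:
  assumes "infinite (UNIV :: 'k set)" "small (k::'k itself) I" "\<And>i. i \<in> I \<Longrightarrow> small k (F i)"
  shows "small k (\<Union>i\<in>I. F i)"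
  using assms card_of_UNION_ordLeq_infinite[of "UNIV :: 'k set" I F]
  by (simp add: small_iff_card_of_ordLeq)

context
  fixes C :: "('o, 'm) cat"
  assumes category: "category C"
begin

lemma Id_arr [simp]: "A \<in> Obj C \<Longrightarrow> Id C A \<in> Arr C"
  and Dom_Id [simp]: "A \<in> Obj C \<Longrightarrow> Dom C (Id C A) = A"
  and Cod_Id [simp]: "A \<in> Obj C \<Longrightarrow> Cod C (Id C A) = A"
  using category unfolding category_def by auto

lemma Comp_arr [simp]: "f \<in> Arr C \<Longrightarrow> g \<in> Arr C \<Longrightarrow> Cod C f = Dom C g \<Longrightarrow> Comp C g f \<in> Arr C"
  and Dom_Comp [simp]: "f \<in> Arr C \<Longrightarrow> g \<in> Arr C \<Longrightarrow> Cod C f = Dom C g \<Longrightarrow> Dom C (Comp C g f) = Dom C f"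
  and Cod_Comp [simp]: "f \<in> Arr C \<Longrightarrow> g \<in> Arr C \<Longrightarrow> Cod C f = Dom C g \<Longrightarrow> Cod C (Comp C g f) = Cod C g"
  using category unfolding category_def by auto

lemma Comp_Id_left: "f \<in> Arr C \<Longrightarrow> Comp C (Id C (Cod C f)) f = f"
  using category unfolding category_def by auto

lemma Comp_Id_right: "f \<in> Arr C \<Longrightarrow> Comp C f (Id C (Dom C f)) = f"
  using category unfolding category_def by auto

lemma Comp_assoc:
  "f \<in> Arr C \<Longrightarrow> g \<in> Arr C \<Longrightarrow> h \<in> Arr C \<Longrightarrow> Cod C f = Dom C g \<Longrightarrow> Cod C g = Dom C h \<Longrightarrow>
   Comp C (Comp C h g) f = Comp C h (Comp C g f)"
  using category unfolding category_def by auto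

lemma factors_trans: "factors C f g \<Longrightarrow> factors C g h \<Longrightarrow> factors C f h"
  unfolding factors_def by (metis Comp_arr Dom_Comp Cod_Comp Comp_assoc)

lemma iso_mono:
  assumes "iso C h"
  shows "mono C h"
  unfolding mono_def
proof (intro conjI ballI impI)
  obtain h' where h: "h \<in> Arr C" and h': "h' \<in> Arr C" "Dom C h' = Cod C h" "Comp C h' h = Id C (Dom C h)"
    using assms unfolding iso_def by blast
  show "h \<in> Arr C" by (fact h)
  have cancel: "Comp C h' (Comp C h x) = x" if "x \<in> Arr C" "Cod C x = Dom C h" for x
    using that h h' Comp_Id_left[of x] by (simp flip: Comp_assoc)
  fix x y assume "x \<in> Arr C" "y \<in> Arr C" "Cod C x = Dom C h" "Cod C y = Dom C h"
    "Comp C h x = Comp C h y"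
  then show "x = y" using cancel by metis
qed

lemma mono_Comp:
  assumes f: "mono C f" and g: "mono C g" and fg: "Cod C f = Dom C g"
  shows "mono C (Comp C g f)"
  unfolding mono_def
proof (intro conjI ballI impI)
  have arr: "f \<in> Arr C" "g \<in> Arr C" using f g unfolding mono_def by blast+
  then show "Comp C g f \<in> Arr C" using fg by simp
  fix x y assume xy: "x \<in> Arr C" "y \<in> Arr C" "Cod C x = Dom C (Comp C g f)"
    "Cod C y = Dom C (Comp C g f)" "Dom C x = Dom C y" "Comp C (Comp C g f) x = Comp C (Comp C g f) y"
  then have "Comp C g (Comp C f x) = Comp C g (Comp C f y)"
    using arr fg by (simp add: Comp_assoc)
  then have "Comp C f x = Comp C f y"
    using g xy arr fg unfolding mono_def by simp
  then show "x = y"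
    using f xy arr fg unfolding mono_def by simp
qed

lemma isomorphic_factors: "isomorphic C f g \<Longrightarrow> factors C f g"
  unfolding isomorphic_def factors_def iso_def by blast

lemma isomorphic_sym:
  assumes "isomorphic C f g"
  shows "isomorphic C g f"
proof -
  obtain h h' where h: "h \<in> Arr C" "Dom C h = Dom C f" "Cod C h = Dom C g" "f = Comp C g h"
    and h': "h' \<in> Arr C" "Dom C h' = Dom C g" "Cod C h' = Dom C f"
      "Comp C h' h = Id C (Dom C f)" "Comp C h h' = Id C (Dom C g)"
    and fg: "f \<in> Arr C" "g \<in> Arr C" "Cod C f = Cod C g"
    using assms unfolding isomorphic_def iso_def by auto
  have "Comp C f h' = Comp C g (Comp C h h')"
    using h h' fg by (simp add: Comp_assoc)
  also have "\<dots> = g"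
    using h'(5) fg(2) by (simp add: Comp_Id_right)
  finally have "g = Comp C f h'" ..
  moreover have "iso C h'"
    unfolding iso_def using h h' by auto
  ultimately show ?thesis
    unfolding isomorphic_def using h' fg by auto
qed

lemma solution_iff:
  "solution C A E a \<longleftrightarrow> a \<in> Arr C \<and> Cod C a = A \<and> (\<forall>e\<in>E. Comp C (fst e) a = Comp C (snd e) a)"
  unfolding solution_def by auto

lemma solution_Comp:
  assumes "\<forall>e\<in>E. equation C A e" "solution C A E v" "h \<in> Arr C" "Cod C h = Dom C v"
  shows "solution C A E (Comp C v h)"
  using assms unfolding solution_iff equation_def by (auto simp: Comp_assoc[symmetric])

lemma solution_if_factors:
  "\<forall>e\<in>E. equation C A e \<Longrightarrow> solution C A E w \<Longrightarrow> factors C f w \<Longrightarrow> solution C A E f"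
  unfolding factors_def using solution_Comp by auto

lemma general_solutionI:
  assumes "solution C A E v" "mono C v" "\<And>a. solution C A E a \<Longrightarrow> factors C a v"
  shows "general_solution C A E v"
  unfolding general_solution_def
proof (intro conjI allI impI assms(1))
  fix a assume "solution C A E a"
  then obtain h where h: "h \<in> Arr C" "Dom C h = Dom C a" "Cod C h = Dom C v" "a = Comp C v h"
    using assms(3) unfolding factors_def by blast
  show "\<exists>!h. h \<in> Arr C \<and> Dom C h = Dom C a \<and> Cod C h = Dom C v \<and> a = Comp C v h"
    using h assms(2) unfolding mono_def by (intro ex1I[of _ h]) auto
qed

lemma general_solution_factors:
  assumes "general_solution C A E v" "solution C A E a"
  shows "factors C a v"
proof -
  obtain h where "h \<in> Arr C" "Dom C h = Dom C a" "Cod C h = Dom C v" "a = Comp C v h"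
    using assms unfolding general_solution_def by blast
  moreover have "v \<in> Arr C" "Cod C v = A" "a \<in> Arr C" "Cod C a = A"
    using assms unfolding general_solution_def solution_def by simp_all
  ultimately show ?thesis unfolding factors_def by auto
qed

lemma general_solution_mono:
  assumes eqs: "\<forall>e\<in>E. equation C A e" and v: "general_solution C A E v"
  shows "mono C v"
  unfolding mono_def
proof (intro conjI ballI impI)
  have sol: "solution C A E v" using v unfolding general_solution_def by blast
  then show "v \<in> Arr C" unfolding solution_def by blast
  fix x y assume xy: "x \<in> Arr C" "y \<in> Arr C" "Cod C x = Dom C v" "Cod C y = Dom C v"
    "Dom C x = Dom C y" "Comp C v x = Comp C v y"
  have unique: "\<exists>!h. h \<in> Arr C \<and> Dom C h = Dom C a \<and> Cod C h = Dom C v \<and> a = Comp C v h"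
    if "solution C A E a" for a
    using v that unfolding general_solution_def by blast
  have "\<exists>!h. h \<in> Arr C \<and> Dom C h = Dom C x \<and> Cod C h = Dom C v \<and> Comp C v x = Comp C v h"
    using unique[OF solution_Comp[OF eqs sol xy(1,3)]] xy(1,3) \<open>v \<in> Arr C\<close> by simp
  then show "x = y"
    using xy by (auto simp: ex1_iff_ex_Uniq intro: Uniq_D)
qed

lemma solution_iff_factors_general_solution:
  assumes "\<forall>e\<in>E. equation C A e" "general_solution C A E v"
  shows "solution C A E a \<longleftrightarrow> factors C a v"
proof
  show "factors C a v" if "solution C A E a"
    using general_solution_factors[OF assms(2) that] .
  show "solution C A E a" if "factors C a v"
    using solution_if_factors[OF assms(1) _ that] assms(2) unfolding general_solution_def by blast
qed

lemma variety_mono: "variety k C A v \<Longrightarrow> mono C v \<and> Cod C v = A"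
  unfolding variety_def system_def
  using general_solution_mono unfolding general_solution_def solution_def by blast

lemma variety_if_isomorphic:
  assumes "variety k C A w" "isomorphic C v w"
  shows "variety k C A v"
proof -
  obtain E where E: "system k C A E" "general_solution C A E w"
    using assms(1) unfolding variety_def by blast
  have eqs: "\<forall>e\<in>E. equation C A e" using E(1) unfolding system_def by blast
  obtain h where h: "iso C h" "Dom C h = Dom C v" "Cod C h = Dom C w" "v = Comp C w h"
    using assms(2) unfolding isomorphic_def by blast
  have h_arr: "h \<in> Arr C" using h(1) unfolding iso_def by blast
  have w: "solution C A E w" using E(2) unfolding general_solution_def by blast
  have "general_solution C A E v"
  proof (rule general_solutionI)
    show "solution C A E v"
      using solution_Comp[OF eqs w h_arr h(3)] h(4) by simp
    show "mono C v"
      using mono_Comp[OF iso_mono[OF h(1)] general_solution_mono[OF eqs E(2)] h(3)] h(4) by simp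
    show "factors C a v" if "solution C A E a" for a
      using factors_trans[OF general_solution_factors[OF E(2) that]
          isomorphic_factors[OF isomorphic_sym[OF assms(2)]]] .
  qed
  then show ?thesis using E(1) unfolding variety_def by blast
qed

lemma wide_pullback_universal:
  assumes "wide_pullback C A M p \<pi>" "q \<in> Arr C" "Cod C q = A"
    "\<forall>m\<in>M. \<sigma> m \<in> Arr C \<and> Dom C (\<sigma> m) = Dom C q \<and> Cod C (\<sigma> m) = Dom C m \<and> Comp C m (\<sigma> m) = q"
  shows "\<exists>!u. u \<in> Arr C \<and> Dom C u = Dom C q \<and> Cod C u = Dom C p \<and> Comp C p u = q \<and>
           (\<forall>m\<in>M. Comp C (\<pi> m) u = \<sigma> m)"
proof -
  have "\<forall>q \<sigma>. q \<in> Arr C \<and> Cod C q = A \<and>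
      (\<forall>m\<in>M. \<sigma> m \<in> Arr C \<and> Dom C (\<sigma> m) = Dom C q \<and> Cod C (\<sigma> m) = Dom C m \<and> Comp C m (\<sigma> m) = q)
      \<longrightarrow> (\<exists>!u. u \<in> Arr C \<and> Dom C u = Dom C q \<and> Cod C u = Dom C p \<and> Comp C p u = q \<and>
                 (\<forall>m\<in>M. Comp C (\<pi> m) u = \<sigma> m))"
    using assms(1) unfolding wide_pullback_def by (elim conjE)
  from this[rule_format, OF conjI[OF assms(2) conjI[OF assms(3) assms(4)]]] show ?thesis .
qed

lemma wide_pullback_factors_leg:
  assumes "wide_pullback C A M p \<pi>" "m \<in> M" "m \<in> Arr C" "Cod C m = A"
  shows "factors C p m"
proof -
  have "p \<in> Arr C" "Cod C p = A"
    "\<pi> m \<in> Arr C" "Dom C (\<pi> m) = Dom C p" "Cod C (\<pi> m) = Dom C m" "Comp C m (\<pi> m) = p"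
    using assms(1,2) unfolding wide_pullback_def by auto
  then show ?thesis
    using assms(3,4) unfolding factors_def by metis
qed

lemma wide_pullback_factors:
  assumes wpb: "wide_pullback C A M p \<pi>" and q: "q \<in> Arr C" "Cod C q = A" "\<forall>m\<in>M. factors C q m"
  shows "factors C q p"
proof -
  have "\<forall>m\<in>M. \<exists>h. h \<in> Arr C \<and> Dom C h = Dom C q \<and> Cod C h = Dom C m \<and> Comp C m h = q"
    using q(3) unfolding factors_def by (metis (no_types))
  then obtain \<sigma> where "\<forall>m\<in>M. \<sigma> m \<in> Arr C \<and> Dom C (\<sigma> m) = Dom C q \<and> Cod C (\<sigma> m) = Dom C m \<and> Comp C m (\<sigma> m) = q"
    by (rule bchoice[THEN exE])
  then obtain u where "u \<in> Arr C" "Dom C u = Dom C q" "Cod C u = Dom C p" "Comp C p u = q"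
    using wide_pullback_universal[OF wpb q(1,2), of \<sigma>] by blast
  moreover have "p \<in> Arr C" "Cod C p = A"
    using wpb unfolding wide_pullback_def by simp_all
  ultimately show ?thesis
    using q unfolding factors_def by metis
qed

lemma wide_pullback_mono:
  assumes wpb: "wide_pullback C A M p \<pi>" and M: "\<And>m. m \<in> M \<Longrightarrow> mono C m"
  shows "mono C p"
  unfolding mono_def
proof (intro conjI ballI impI)
  have p: "p \<in> Arr C" "Cod C p = A"
    and \<pi>: "\<And>m. m \<in> M \<Longrightarrow> \<pi> m \<in> Arr C \<and> Dom C (\<pi> m) = Dom C p \<and> Cod C (\<pi> m) = Dom C m \<and> Comp C m (\<pi> m) = p"
    using wpb unfolding wide_pullback_def by auto
  show "p \<in> Arr C" by (fact p(1))
  fix x y assume xy: "x \<in> Arr C" "y \<in> Arr C" "Cod C x = Dom C p" "Cod C y = Dom C p"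
    "Dom C x = Dom C y" "Comp C p x = Comp C p y"
  have leg_Comp: "Comp C m (Comp C (\<pi> m) z) = Comp C p z" if "m \<in> M" "z \<in> Arr C" "Cod C z = Dom C p" for m z
    using that \<pi>[OF that(1)] M[OF that(1)] unfolding mono_def by (auto simp flip: Comp_assoc)
  \<comment> \<open>\<open>x\<close> and \<open>y\<close> mediate the same cone: their legs agree since each \<open>m\<close> is mono\<close>
  have legs: "Comp C (\<pi> m) y = Comp C (\<pi> m) x" if "m \<in> M" for m
    using M[OF that] \<pi>[OF that] leg_Comp[OF that] xy unfolding mono_def by auto
  have "\<exists>!u. u \<in> Arr C \<and> Dom C u = Dom C x \<and> Cod C u = Dom C p \<and> Comp C p u = Comp C p x \<and>
           (\<forall>m\<in>M. Comp C (\<pi> m) u = Comp C (\<pi> m) x)"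
    using wide_pullback_universal[OF wpb, of "Comp C p x" "\<lambda>m. Comp C (\<pi> m) x"] \<pi> xy p leg_Comp
    by simp
  then show "x = y"
    using xy legs by (auto simp: ex1_iff_ex_Uniq intro: Uniq_D)
qed

lemma variety_wide_pullback:
  assumes inf: "infinite (UNIV :: 'k set)" and A: "A \<in> Obj C"
    and M: "small (k::'k itself) M" "\<And>m. m \<in> M \<Longrightarrow> variety k C A m"
    and wpb: "wide_pullback C A M p \<pi>"
  shows "variety k C A p"
proof -
  have "\<forall>m\<in>M. \<exists>E. system k C A E \<and> general_solution C A E m"
    using M(2) unfolding variety_def by blast
  then obtain Sys where Sys: "\<forall>m\<in>M. system k C A (Sys m) \<and> general_solution C A (Sys m) m"
    by (rule bchoice[THEN exE])
  then have Sys_system: "\<And>m. m \<in> M \<Longrightarrow> system k C A (Sys m)"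
    and Sys_general: "\<And>m. m \<in> M \<Longrightarrow> general_solution C A (Sys m) m"
    by simp_all
  have Sys_eqs: "\<forall>e\<in>Sys m. equation C A e" if "m \<in> M" for m
    using Sys_system[OF that] unfolding system_def by blast
  have m_mono: "mono C m" "m \<in> Arr C" "Cod C m = A" if "m \<in> M" for m
    using variety_mono[OF M(2)[OF that]] unfolding mono_def by simp_all
  \<comment> \<open>the trivial equation keeps the system non-empty when \<open>M\<close> is empty\<close>
  define E where "E = insert (Id C A, Id C A) (\<Union>m\<in>M. Sys m)"
  have "small k (\<Union>m\<in>M. Sys m)"
    using small_UN[OF inf M(1)] Sys_system unfolding system_def by blast
  then have E: "system k C A E"
    unfolding system_def E_def
    using A Sys_system small_insert[OF inf] by (auto simp: system_def equation_def)
  have solution_E: "solution C A E a \<longleftrightarrow> a \<in> Arr C \<and> Cod C a = A \<and> (\<forall>m\<in>M. factors C a m)" for a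
  proof -
    have "solution C A E a \<longleftrightarrow> a \<in> Arr C \<and> Cod C a = A \<and> (\<forall>m\<in>M. solution C A (Sys m) a)"
      unfolding E_def solution_iff by auto
    also have "\<dots> \<longleftrightarrow> a \<in> Arr C \<and> Cod C a = A \<and> (\<forall>m\<in>M. factors C a m)"
      using solution_iff_factors_general_solution[OF Sys_eqs Sys_general] by simp
    finally show ?thesis .
  qed
  have p: "p \<in> Arr C" "Cod C p = A"
    using wpb unfolding wide_pullback_def by simp_all
  have "general_solution C A E p"
  proof (rule general_solutionI)
    show "solution C A E p"
      using p wide_pullback_factors_leg[OF wpb] m_mono by (simp add: solution_E)
    show "mono C p"
      using wide_pullback_mono[OF wpb] m_mono(1) by blast
    show "factors C a p" if "solution C A E a" for a
      using that wide_pullback_factors[OF wpb] by (simp add: solution_E)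
  qed
  then show ?thesis
    using E unfolding variety_def by blast
qed

lemma complete_wrt_varieties_if_wellpowered_and_intersections:
  assumes inf: "infinite (UNIV :: 'k set)"
    and wellpowered: "wellpowered_wrt_varieties (k::'k itself) C" and intersections: "has_intersections k C"
  shows "complete_wrt_varieties k C"
  unfolding complete_wrt_varieties_def
proof (intro allI impI)
  fix A S assume "morphism_family k C A S"
  then have A: "A \<in> Obj C" and S: "\<And>f. f \<in> S \<Longrightarrow> f \<in> Arr C \<and> Cod C f = A"
    unfolding morphism_family_def by auto
  obtain R where R: "small k R" "\<And>v. variety k C A v \<Longrightarrow> \<exists>r\<in>R. isomorphic C v r"
    using wellpowered A unfolding wellpowered_wrt_varieties_def by blast
  define M where "M = {r \<in> R. variety k C A r \<and> (\<forall>f\<in>S. factors C f r)}"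
  have M_small: "small k M"
    by (rule small_subset[OF R(1)]) (auto simp: M_def)
  have M_variety: "variety k C A m" "\<forall>f\<in>S. factors C f m" if "m \<in> M" for m
    using that unfolding M_def by simp_all
  obtain p \<pi> where wpb: "wide_pullback C A M p \<pi>"
    using intersections A M_small variety_mono[OF M_variety(1)] unfolding has_intersections_def by blast
  have "variety k C A p"
    by (rule variety_wide_pullback[OF inf A M_small M_variety(1) wpb])
  moreover have "\<forall>f\<in>S. factors C f p"
    using S M_variety(2) wide_pullback_factors[OF wpb] by blast
  moreover have "factors C p w" if w: "variety k C A w" "\<forall>f\<in>S. factors C f w" for w
  proof -
    obtain r where r: "r \<in> R" "isomorphic C w r" using R(2)[OF w(1)] by blast
    have r_w: "factors C r w" using isomorphic_factors[OF isomorphic_sym[OF r(2)]] .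
    have "r \<in> M"
      unfolding M_def
      using r w variety_if_isomorphic[OF w(1) isomorphic_sym[OF r(2)]]
        factors_trans isomorphic_factors[OF r(2)] by blast
    moreover have "r \<in> Arr C" "Cod C r = A"
      using variety_mono[OF M_variety(1)[OF \<open>r \<in> M\<close>]] unfolding mono_def by simp_all
    ultimately have "factors C p r"
      by (rule wide_pullback_factors_leg[OF wpb])
    then show ?thesis using r_w by (rule factors_trans)
  qed
  ultimately show "\<exists>v. variety_generated_by k C A S v"
    unfolding variety_generated_by_def by blast
qed

lemma complete_wrt_varieties_if_complete_wrt_systems:
  assumes systems: "complete_wrt_systems k C" and solutions: "every_system_has_general_solution k C"
  shows "complete_wrt_varieties k C"
  unfolding complete_wrt_varieties_def
proof (intro allI impI)
  fix A S assume "morphism_family k C A S"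
  then obtain E where E: "system_generated_by k C A S E"
    using systems unfolding complete_wrt_systems_def by blast
  then have E_system: "system k C A E" and S_solves: "\<forall>f\<in>S. solution C A E f"
    unfolding system_generated_by_def by blast+
  obtain v where v: "general_solution C A E v"
    using solutions E_system unfolding every_system_has_general_solution_def by blast
  have "variety k C A v"
    using E_system v unfolding variety_def by blast
  moreover have "\<forall>f\<in>S. factors C f v"
    using S_solves general_solution_factors[OF v] by blast
  moreover have "factors C v w" if w: "variety k C A w" "\<forall>f\<in>S. factors C f w" for w
  proof -
    obtain K where K: "system k C A K" "general_solution C A K w"
      using w(1) unfolding variety_def by blast
    have K_eqs: "\<forall>e\<in>K. equation C A e" using K(1) unfolding system_def by blast
    have "\<forall>f\<in>S. solution C A K f"
      using w(2) solution_iff_factors_general_solution[OF K_eqs K(2)] by blast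
    then have "sys_implies C A E K"
      using E K(1) unfolding system_generated_by_def by blast
    then have "solution C A K v"
      using v unfolding sys_implies_def general_solution_def by blast
    then show ?thesis
      using general_solution_factors[OF K(2)] by blast
  qed
  ultimately show "\<exists>v. variety_generated_by k C A S v"
    unfolding variety_generated_by_def by blast
qed

end

theorem mainTheorem8:
  fixes C :: "('o, 'm) cat" and k :: "'k itself"
  assumes "category C"
    and "infinite (UNIV :: 'k set)"
    and "(wellpowered_wrt_varieties k C \<and> has_intersections k C) \<or>
         (complete_wrt_systems k C \<and> every_system_has_general_solution k C)"
  shows "complete_wrt_varieties k C"
  using assms(3)
proof
  assume "wellpowered_wrt_varieties k C \<and> has_intersections k C"
  then show ?thesis
    using complete_wrt_varieties_if_wellpowered_and_intersections[OF assms(1,2)] by blast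
next
  assume "complete_wrt_systems k C \<and> every_system_has_general_solution k C"
  then show ?thesis
    using complete_wrt_varieties_if_complete_wrt_systems[OF assms(1)] by blast
qed

end
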